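(* Let $f:\mathbb{R}^d\to\mathbb{R}$ be a convex differentiable function whose gradient is $L$-Lipschitz, with minimizer $x^*$. Consider iterates $x_{t+1}=x_t-\gamma_t\bar g_t$ where $\bar g_t$ is a stochastic gradient at $x_t$, $g_t=\nabla f(x_t)$, and $\epsilon_t=\bar g_t-g_t$ has mean zero conditionally on the history $x_0,\dots,x_t$, with $\sigma_t^2=\mathbb{E}[|\epsilon_t|^2]$ and $\eta_t^4=\mathbb{E}[|\epsilon_t|^4]$; let $\bar\sigma^2=\frac1T\sum_t\sigma_t^2$ and $\bar\eta^4=\frac1T\sum_t\eta_t^4$ (assumed finite). Assume $0<\gamma_t\le\frac1L$ for all $t$, $|x_t-x^*|^2\le M^2$ for all $t$, and that the distribution of $\epsilon_t$ is symmetric for every $t$. Define $$S_T=\frac{1}{\gamma_T T}\cdot\frac{M^2}{2}+\frac{1}{2T}\sum_{t=1}^T\gamma_t\big(1+L\gamma_t\big)|\epsilon_t|^2-\frac1T\sum_{t=1}^T\epsilon_t\cdot\big(x_t-L\gamma_t^2g_t-x^*\big).$$ Then $$\mathrm{Var}(S_T)\le\frac1T\Big[4M^2\bar\sigma^2+\frac{\bar\eta^4}{L^2}\Big].$$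
   Context: $\bar g_t$ is the average of per-sample gradients over a randomly drawn mini-batch at $x_t$; the stochastic errors at different times are independent. Expectations and variances of $S_T$ are taken with respect to the stochastic errors $\epsilon_1,\dots,\epsilon_T$ (iterated, conditionally on the history). The quantity $S_T$ is an upper bound for the averaged loss $\frac1T\sum_{t=1}^T[f(x_t)-f(x^* )]$. *)

theory Defs
  imports "HOL-Probability.Probability"
begin

definition hist :: "'a measure \<Rightarrow> (nat \<Rightarrow> 'a \<Rightarrow> 'e::euclidean_space) \<Rightarrow> nat \<Rightarrow> 'a measure" where
  "hist P x t = sigma (space P) {x s -` B \<inter> space P | s B. s \<le> t \<and> B \<in> sets borel}"

end

theory Submission
  imports Defs
begin

(* Write S_T = E S_T + \<Sum>_t Z_t with Z_t = a_t (|\<epsilon>_t|^2 - \<sigma>_t^2) - (1/T) \<epsilon>_t \<bullet> v_t,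
   where a_t = \<gamma>_t (1 + L \<gamma>_t) / (2T) and v_t = x_t - L \<gamma>_t^2 g_t - x^* is a function of
   \<epsilon>_0, ..., \<epsilon>_(t-1) with |v_t| \<le> 2M (because |g_t| \<le> L |x_t - x^*| and L \<gamma>_t \<le> 1).
   Independence of the noise makes the Z_t pairwise orthogonal, and the symmetry of \<epsilon>_t kills
   the remaining odd moment E[|\<epsilon>_t|^2 \<epsilon>_t]; hence Var S_T = \<Sum>_t E[Z_t^2]
   \<le> \<Sum>_t (a_t^2 \<eta>_t^4 + 4 M^2 \<sigma>_t^2 / T^2), and a_t \<le> 1 / (L T). *)

primrec sgd_path :: "'e::real_vector \<Rightarrow> (nat \<Rightarrow> real) \<Rightarrow> ('e \<Rightarrow> 'e) \<Rightarrow> (nat \<Rightarrow> 'e) \<Rightarrow> nat \<Rightarrow> 'e"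
  where
    "sgd_path x0 \<gamma> g e 0 = x0"
  | "sgd_path x0 \<gamma> g e (Suc t) = sgd_path x0 \<gamma> g e t - \<gamma> t *\<^sub>R (g (sgd_path x0 \<gamma> g e t) + e t)"

lemma sgd_path_cong: "(\<And>j. j < t \<Longrightarrow> e j = e' j) \<Longrightarrow> sgd_path x0 \<gamma> g e t = sgd_path x0 \<gamma> g e' t"
  by (induction t) auto

lemma measurable_sgd_path:
  fixes g :: "'e::euclidean_space \<Rightarrow> 'e"
  assumes [measurable]: "g \<in> borel_measurable borel" and "{..<t} \<subseteq> J"
  shows "(\<lambda>e. sgd_path x0 \<gamma> g e t) \<in> borel_measurable (PiM J (\<lambda>_. borel))"
  using assms(2)
proof (induction t)
  case (Suc t)
  then have "{..<t} \<subseteq> J" and "t \<in> J" by (auto simp: subset_iff)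
  with Suc.IH have [measurable]: "(\<lambda>e. sgd_path x0 \<gamma> g e t) \<in> borel_measurable (PiM J (\<lambda>_. borel))"
    and [measurable]: "(\<lambda>e. e t) \<in> borel_measurable (PiM J (\<lambda>_. borel))"
    by (simp_all add: measurable_component_singleton)
  show ?case unfolding sgd_path.simps by measurable
qed simp

lemma iterates_eq_sgd_path:
  assumes "x 0 = x0" and "\<And>t. x (Suc t) = x t - \<gamma> t *\<^sub>R (g (x t) + e t)"
  shows "x t = sgd_path x0 \<gamma> g (\<lambda>j\<in>{..<t}. e j) t"
proof -
  have "x t = sgd_path x0 \<gamma> g e t"
    by (induction t) (simp_all add: assms)
  also have "\<dots> = sgd_path x0 \<gamma> g (\<lambda>j\<in>{..<t}. e j) t"
    by (rule sgd_path_cong) simp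
  finally show ?thesis .
qed

lemma gradient_eq_0_at_minimizer:
  fixes f :: "'e::real_inner \<Rightarrow> real"
  assumes "(f has_derivative (\<lambda>h. g \<bullet> h)) (at x)" and "\<And>y. f x \<le> f y"
  shows "g = 0"
proof -
  have "(\<lambda>h. g \<bullet> h) = (\<lambda>h. 0)"
    using assms(1) by (rule has_derivative_local_min) (auto intro: always_eventually assms(2))
  then show ?thesis
    by (metis inner_eq_zero_iff)
qed

lemma norm_sub_scaled_grad_le:
  fixes g :: "'e::real_normed_vector \<Rightarrow> 'e"
  assumes lip: "\<And>y z. norm (g y - g z) \<le> L * norm (y - z)" and "g xs = 0"
    and "0 < L" "0 < \<gamma>" "\<gamma> \<le> 1 / L"
  shows "norm (y - (L * \<gamma>\<^sup>2) *\<^sub>R g y - xs) \<le> 2 * norm (y - xs)"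
proof -
  have "(L * \<gamma>\<^sup>2) * L = (L * \<gamma>)\<^sup>2"
    by (simp add: power2_eq_square)
  also have "\<dots> \<le> 1"
    using assms(3-5) by (intro power_le_one) (auto simp: field_simps)
  finally have step: "(L * \<gamma>\<^sup>2) * L \<le> 1" .
  have "norm ((L * \<gamma>\<^sup>2) *\<^sub>R g y) = (L * \<gamma>\<^sup>2) * norm (g y - g xs)"
    using assms(2,3) by simp
  also have "\<dots> \<le> (L * \<gamma>\<^sup>2) * (L * norm (y - xs))"
    using lip assms(3) by (intro mult_left_mono) auto
  also have "\<dots> = ((L * \<gamma>\<^sup>2) * L) * norm (y - xs)"
    by (rule mult.assoc[symmetric])
  also have "\<dots> \<le> norm (y - xs)"
    using mult_right_mono[OF step norm_ge_zero[of "y - xs"]] by (simp only: mult_1_left)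
  finally have "norm ((L * \<gamma>\<^sup>2) *\<^sub>R g y) \<le> norm (y - xs)" .
  moreover have "norm ((y - xs) - (L * \<gamma>\<^sup>2) *\<^sub>R g y) \<le> norm (y - xs) + norm ((L * \<gamma>\<^sup>2) *\<^sub>R g y)"
    by (rule norm_triangle_ineq4)
  ultimately show ?thesis
    by (simp add: algebra_simps)
qed

lemma step_weight_le:
  fixes L \<gamma> :: real
  assumes "0 < L" "0 < \<gamma>" "\<gamma> \<le> 1 / L"
  shows "\<gamma> * (1 + L * \<gamma>) \<le> 2 / L"
proof -
  have "L * \<gamma> \<le> 1"
    using assms by (simp add: field_simps)
  then have "\<gamma> * (1 + L * \<gamma>) \<le> \<gamma> * 2"
    using assms(2) by (intro mult_left_mono) auto
  also have "\<dots> \<le> 2 / L"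
    using assms(3) by simp
  finally show ?thesis .
qed

lemma integrable_bound_on_space:
  fixes f :: "'a \<Rightarrow> real" and g :: "'a \<Rightarrow> 'b::{banach, second_countable_topology}"
  assumes "integrable M f" "g \<in> borel_measurable M" "\<And>x. x \<in> space M \<Longrightarrow> norm (g x) \<le> f x"
  shows "integrable M g"
proof (rule Bochner_Integration.integrable_bound[OF assms(1,2)], rule AE_I2)
  show "norm (g x) \<le> norm (f x)" if "x \<in> space M" for x
    using assms(3)[OF that] by simp
qed

lemma integrable_mult_of_squares:
  fixes f g :: "'a \<Rightarrow> real"
  assumes "f \<in> borel_measurable M" "g \<in> borel_measurable M"
    and "integrable M (\<lambda>x. (f x)\<^sup>2)" "integrable M (\<lambda>x. (g x)\<^sup>2)"
  shows "integrable M (\<lambda>x. f x * g x)"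
proof (rule integrable_bound_on_space)
  show "integrable M (\<lambda>x. (f x)\<^sup>2 + (g x)\<^sup>2)" using assms(3,4) by simp
  show "norm (f x * g x) \<le> (f x)\<^sup>2 + (g x)\<^sup>2" for x
  proof -
    have "\<bar>f x\<bar> * \<bar>g x\<bar> \<le> 2 * \<bar>f x\<bar> * \<bar>g x\<bar>" by simp
    also have "\<dots> \<le> \<bar>f x\<bar>\<^sup>2 + \<bar>g x\<bar>\<^sup>2" by (rule sum_squares_bound)
    finally show ?thesis by (simp add: abs_mult)
  qed
qed (use assms(1,2) in simp)

lemma (in finite_measure) integrable_lower_power:
  fixes X :: "'a \<Rightarrow> real"
  assumes "X \<in> borel_measurable M" "\<And>x. x \<in> space M \<Longrightarrow> 0 \<le> X x"
    and "integrable M (\<lambda>x. X x ^ n)" "k \<le> n"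
  shows "integrable M (\<lambda>x. X x ^ k)"
proof (rule integrable_bound_on_space)
  show "integrable M (\<lambda>x. 1 + X x ^ n)" using assms(3) by simp
  show "norm (X x ^ k) \<le> 1 + X x ^ n" if "x \<in> space M" for x
  proof (cases "X x \<le> 1")
    case True
    then have "X x ^ k \<le> 1" using assms(2)[OF that] by (intro power_le_one) auto
    then show ?thesis using assms(2)[OF that] by (simp add: add_increasing2)
  next
    case False
    then have "X x ^ k \<le> X x ^ n" using assms(4) by (intro power_increasing) auto
    then show ?thesis using assms(2)[OF that] by simp
  qed
qed (use assms(1) in simp)

lemma integrable_square_scaled_diff:
  fixes f g :: "'a \<Rightarrow> real"
  assumes "f \<in> borel_measurable M" "g \<in> borel_measurable M"
    and "integrable M (\<lambda>x. (f x)\<^sup>2)" "integrable M (\<lambda>x. (g x)\<^sup>2)"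
  shows "integrable M (\<lambda>x. (a * f x - b * g x)\<^sup>2)"
proof -
  have "(a * f x - b * g x)\<^sup>2 = a\<^sup>2 * (f x)\<^sup>2 - 2 * a * b * (f x * g x) + b\<^sup>2 * (g x)\<^sup>2" for x
    by (simp add: power2_diff power_mult_distrib)
  then show ?thesis
    using assms integrable_mult_of_squares[OF assms] by simp
qed

lemma integral_square_sum_orthogonal:
  fixes Z :: "'i \<Rightarrow> 'a \<Rightarrow> real"
  assumes "finite I" and meas: "\<And>t. t \<in> I \<Longrightarrow> Z t \<in> borel_measurable M"
    and square: "\<And>t. t \<in> I \<Longrightarrow> integrable M (\<lambda>\<omega>. (Z t \<omega>)\<^sup>2)"
    and orth: "\<And>t s. t \<in> I \<Longrightarrow> s \<in> I \<Longrightarrow> t \<noteq> s \<Longrightarrow> (\<integral>\<omega>. Z t \<omega> * Z s \<omega> \<partial>M) = 0"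
  shows "(\<integral>\<omega>. (\<Sum>t\<in>I. Z t \<omega>)\<^sup>2 \<partial>M) = (\<Sum>t\<in>I. \<integral>\<omega>. (Z t \<omega>)\<^sup>2 \<partial>M)"
proof -
  have int: "integrable M (\<lambda>\<omega>. Z t \<omega> * Z s \<omega>)" if "t \<in> I" "s \<in> I" for t s
    using that by (intro integrable_mult_of_squares meas square)
  have "(\<integral>\<omega>. (\<Sum>t\<in>I. Z t \<omega>)\<^sup>2 \<partial>M) = (\<integral>\<omega>. (\<Sum>t\<in>I. \<Sum>s\<in>I. Z t \<omega> * Z s \<omega>) \<partial>M)"
    by (simp add: power2_eq_square sum_product)
  also have "\<dots> = (\<Sum>t\<in>I. \<Sum>s\<in>I. \<integral>\<omega>. Z t \<omega> * Z s \<omega> \<partial>M)"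
    using int by (simp add: Bochner_Integration.integral_sum integrable_sum)
  also have "\<dots> = (\<Sum>t\<in>I. \<Sum>s\<in>I. if s = t then \<integral>\<omega>. (Z t \<omega>)\<^sup>2 \<partial>M else 0)"
    by (intro sum.cong refl) (auto simp: orth power2_eq_square)
  also have "\<dots> = (\<Sum>t\<in>I. \<integral>\<omega>. (Z t \<omega>)\<^sup>2 \<partial>M)"
    using assms(1) by simp
  finally show ?thesis .
qed

context prob_space
begin

lemma indep_var_integral_inner:
  fixes X Y :: "'a \<Rightarrow> 'e::euclidean_space"
  assumes indep: "indep_var borel X borel Y" and X: "integrable M X" and Y: "integrable M Y"
  shows "(\<integral>\<omega>. X \<omega> \<bullet> Y \<omega> \<partial>M) = (\<integral>\<omega>. X \<omega> \<partial>M) \<bullet> (\<integral>\<omega>. Y \<omega> \<partial>M)"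
proof -
  have "indep_var borel ((\<lambda>x. x \<bullet> b) \<circ> X) borel ((\<lambda>y. y \<bullet> b) \<circ> Y)" for b
    by (rule indep_var_compose[OF indep]) auto
  then have indep_b: "indep_var borel (\<lambda>\<omega>. X \<omega> \<bullet> b) borel (\<lambda>\<omega>. Y \<omega> \<bullet> b)" for b
    by (simp add: comp_def)
  have "(\<integral>\<omega>. X \<omega> \<bullet> Y \<omega> \<partial>M) = (\<integral>\<omega>. (\<Sum>b\<in>Basis. (X \<omega> \<bullet> b) * (Y \<omega> \<bullet> b)) \<partial>M)"
    by (subst euclidean_inner) (rule refl)
  also have "\<dots> = (\<Sum>b\<in>Basis. \<integral>\<omega>. (X \<omega> \<bullet> b) * (Y \<omega> \<bullet> b) \<partial>M)"
    by (intro Bochner_Integration.integral_sum indep_var_integrable[OF indep_b] integrable_inner_left X Y)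
  also have "\<dots> = (\<Sum>b\<in>Basis. (\<integral>\<omega>. X \<omega> \<bullet> b \<partial>M) * (\<integral>\<omega>. Y \<omega> \<bullet> b \<partial>M))"
    by (intro sum.cong refl indep_var_lebesgue_integral[OF indep_b] integrable_inner_left X Y)
  also have "\<dots> = (\<Sum>b\<in>Basis. ((\<integral>\<omega>. X \<omega> \<partial>M) \<bullet> b) * ((\<integral>\<omega>. Y \<omega> \<partial>M) \<bullet> b))"
    using X Y by simp
  also have "\<dots> = (\<integral>\<omega>. X \<omega> \<partial>M) \<bullet> (\<integral>\<omega>. Y \<omega> \<partial>M)"
    by (rule euclidean_inner[symmetric])
  finally show ?thesis .
qed

lemma indep_var_component_restrict:
  assumes indep: "indep_vars (\<lambda>_. N) X I" and "k \<in> I" "J \<subseteq> I" "k \<notin> J"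
    and g: "g \<in> measurable N N'" and h: "h \<in> measurable (PiM J (\<lambda>_. N)) N'"
  shows "indep_var N' (\<lambda>\<omega>. g (X k \<omega>)) N' (\<lambda>\<omega>. h (\<lambda>j\<in>J. X j \<omega>))"
proof -
  have "indep_var (PiM {k} (\<lambda>_. N)) (\<lambda>\<omega>. \<lambda>j\<in>{k}. X j \<omega>) (PiM J (\<lambda>_. N)) (\<lambda>\<omega>. \<lambda>j\<in>J. X j \<omega>)"
    using assms(2-4) by (intro indep_var_restrict[OF indep]) auto
  then have "indep_var N' ((\<lambda>f. g (f k)) \<circ> (\<lambda>\<omega>. \<lambda>j\<in>{k}. X j \<omega>)) N' (h \<circ> (\<lambda>\<omega>. \<lambda>j\<in>J. X j \<omega>))"
    using g h by (intro indep_var_compose) auto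
  then show ?thesis
    by (simp add: comp_def)
qed

lemma integral_inner_indep_mean_zero:
  fixes \<epsilon> :: "'i \<Rightarrow> 'a \<Rightarrow> 'e::euclidean_space"
    and g :: "'e \<Rightarrow> 'f::euclidean_space" and h :: "('i \<Rightarrow> 'e) \<Rightarrow> 'f"
  assumes indep: "indep_vars (\<lambda>_. borel) \<epsilon> UNIV" and "k \<notin> J"
    and g: "g \<in> borel_measurable borel" and h: "h \<in> borel_measurable (PiM J (\<lambda>_. borel))"
    and Y: "\<And>\<omega>. \<omega> \<in> space M \<Longrightarrow> Y \<omega> = h (\<lambda>j\<in>J. \<epsilon> j \<omega>)"
    and "integrable M (\<lambda>\<omega>. g (\<epsilon> k \<omega>))" "integrable M Y"
    and "(\<integral>\<omega>. g (\<epsilon> k \<omega>) \<partial>M) = 0"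
  shows "(\<integral>\<omega>. g (\<epsilon> k \<omega>) \<bullet> Y \<omega> \<partial>M) = 0"
proof -
  have "indep_var borel (\<lambda>\<omega>. g (\<epsilon> k \<omega>)) borel (\<lambda>\<omega>. h (\<lambda>j\<in>J. \<epsilon> j \<omega>))"
    using \<open>k \<notin> J\<close> by (intro indep_var_component_restrict[OF indep _ _ _ g h]) auto
  moreover have "integrable M (\<lambda>\<omega>. h (\<lambda>j\<in>J. \<epsilon> j \<omega>))"
    by (rule Bochner_Integration.integrable_cong[THEN iffD1, OF refl _ assms(7)]) (simp add: Y)
  ultimately have "(\<integral>\<omega>. g (\<epsilon> k \<omega>) \<bullet> h (\<lambda>j\<in>J. \<epsilon> j \<omega>) \<partial>M)
      = (\<integral>\<omega>. g (\<epsilon> k \<omega>) \<partial>M) \<bullet> (\<integral>\<omega>. h (\<lambda>j\<in>J. \<epsilon> j \<omega>) \<partial>M)"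
    using assms(6) by (intro indep_var_integral_inner)
  also have "(\<integral>\<omega>. g (\<epsilon> k \<omega>) \<bullet> h (\<lambda>j\<in>J. \<epsilon> j \<omega>) \<partial>M) = (\<integral>\<omega>. g (\<epsilon> k \<omega>) \<bullet> Y \<omega> \<partial>M)"
    by (rule Bochner_Integration.integral_cong) (simp_all add: Y)
  finally show ?thesis
    using assms(8) by simp
qed

lemma integral_odd_symmetric_eq_0:
  fixes X :: "'a \<Rightarrow> 'e::euclidean_space" and g :: "'e \<Rightarrow> 'f::{banach, second_countable_topology}"
  assumes X: "X \<in> borel_measurable M" and g: "g \<in> borel_measurable borel"
    and sym: "distr M borel X = distr M borel (\<lambda>\<omega>. - X \<omega>)"
    and odd: "\<And>e. g (- e) = - g e"
  shows "(\<integral>\<omega>. g (X \<omega>) \<partial>M) = 0"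
proof -
  have "(\<integral>\<omega>. g (X \<omega>) \<partial>M) = (\<integral>e. g e \<partial>distr M borel X)"
    using X g by (simp add: integral_distr)
  also have "\<dots> = (\<integral>\<omega>. g (- X \<omega>) \<partial>M)"
    using X g by (simp add: sym integral_distr)
  also have "\<dots> = - (\<integral>\<omega>. g (X \<omega>) \<partial>M)"
    by (simp add: odd)
  finally have "2 *\<^sub>R (\<integral>\<omega>. g (X \<omega>) \<partial>M) = 0"
    by (metis add.inverse_inverse add.right_inverse scaleR_2)
  then show ?thesis by simp
qed

end

locale symmetric_noise = prob_space +
  fixes \<epsilon> :: "nat \<Rightarrow> 'a \<Rightarrow> 'e::euclidean_space"
    and v :: "nat \<Rightarrow> 'a \<Rightarrow> 'e" and V :: "nat \<Rightarrow> (nat \<Rightarrow> 'e) \<Rightarrow> 'e" and B :: real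
  assumes noise_measurable [measurable]: "\<And>t. \<epsilon> t \<in> borel_measurable M"
    and noise_indep: "indep_vars (\<lambda>_. borel) \<epsilon> UNIV"
    and noise_symmetric: "\<And>t. distr M borel (\<epsilon> t) = distr M borel (\<lambda>\<omega>. - \<epsilon> t \<omega>)"
    and noise_fourth_moment: "\<And>t. integrable M (\<lambda>\<omega>. norm (\<epsilon> t \<omega>) ^ 4)"
    and predictable: "\<And>t \<omega>. \<omega> \<in> space M \<Longrightarrow> v t \<omega> = V t (\<lambda>j\<in>{..<t}. \<epsilon> j \<omega>)"
    and predictable_measurable: "\<And>t. V t \<in> borel_measurable (PiM {..<t} (\<lambda>_. borel))"
    and predictable_bounded: "\<And>t \<omega>. \<omega> \<in> space M \<Longrightarrow> norm (v t \<omega>) \<le> B"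
begin

lemma measurable_predictable_restrict:
  "{..<t} \<subseteq> J \<Longrightarrow> (\<lambda>f. V t (restrict f {..<t})) \<in> borel_measurable (PiM J (\<lambda>_. borel))"
  by (rule measurable_compose[OF measurable_restrict_subset predictable_measurable])

lemma predictable_process_measurable [measurable]: "v t \<in> borel_measurable M"
proof -
  have "(\<lambda>\<omega>. V t (\<lambda>j\<in>{..<t}. \<epsilon> j \<omega>)) \<in> borel_measurable M"
    by (rule measurable_compose[OF measurable_restrict predictable_measurable]) simp
  then show ?thesis
    by (subst measurable_cong[OF predictable])
qed

lemma integrable_noise_power: "k \<le> 4 \<Longrightarrow> integrable M (\<lambda>\<omega>. norm (\<epsilon> t \<omega>) ^ k)"
  by (rule integrable_lower_power[OF _ _ noise_fourth_moment]) auto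

lemma integrable_noise: "integrable M (\<epsilon> t)"
  using integrable_noise_power[of 1 t] by (subst integrable_norm_iff[symmetric]) auto

lemma integrable_cubic_noise: "integrable M (\<lambda>\<omega>. norm (\<epsilon> t \<omega>) ^ 2 *\<^sub>R \<epsilon> t \<omega>)"
proof -
  have "norm (norm (\<epsilon> t \<omega>) ^ 2 *\<^sub>R \<epsilon> t \<omega>) = norm (\<epsilon> t \<omega>) ^ 3" for \<omega>
    by (simp add: power2_eq_square power3_eq_cube)
  then show ?thesis
    using integrable_noise_power[of 3 t] by (subst integrable_norm_iff[symmetric]) auto
qed

lemma integral_noise: "(\<integral>\<omega>. \<epsilon> t \<omega> \<partial>M) = 0"
  using integral_odd_symmetric_eq_0[OF noise_measurable _ noise_symmetric, of "\<lambda>e. e"] by simp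

lemma integral_cubic_noise: "(\<integral>\<omega>. norm (\<epsilon> t \<omega>) ^ 2 *\<^sub>R \<epsilon> t \<omega> \<partial>M) = 0"
  using integral_odd_symmetric_eq_0[OF noise_measurable _ noise_symmetric, of "\<lambda>e. norm e ^ 2 *\<^sub>R e"]
  by simp

lemma integrable_predictable: "integrable M (v t)"
  by (rule integrable_bound_on_space[of _ "\<lambda>_. B"]) (auto simp: predictable_bounded)

lemma integral_noise_mult_indep:
  fixes f g :: "'e \<Rightarrow> real"
  assumes "s \<noteq> t" "f \<in> borel_measurable borel" "g \<in> borel_measurable borel"
    and "integrable M (\<lambda>\<omega>. f (\<epsilon> s \<omega>))" "integrable M (\<lambda>\<omega>. g (\<epsilon> t \<omega>))"
  shows "(\<integral>\<omega>. f (\<epsilon> s \<omega>) * g (\<epsilon> t \<omega>) \<partial>M) = (\<integral>\<omega>. f (\<epsilon> s \<omega>) \<partial>M) * (\<integral>\<omega>. g (\<epsilon> t \<omega>) \<partial>M)"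
proof -
  have "indep_var borel (\<lambda>\<omega>. f (\<epsilon> s \<omega>)) borel (\<lambda>\<omega>. (\<lambda>h. g (h t)) (\<lambda>j\<in>{t}. \<epsilon> j \<omega>))"
    using assms(1-3) by (intro indep_var_component_restrict[OF noise_indep]) auto
  then show ?thesis
    using assms(4,5) by (simp add: indep_var_lebesgue_integral)
qed

lemma predictable_bound_nonneg: "0 \<le> B"
proof -
  obtain \<omega> where "\<omega> \<in> space M"
    using not_empty by blast
  then show ?thesis
    by (meson norm_ge_zero order_trans predictable_bounded)
qed

lemma abs_inner_predictable_le:
  assumes "\<omega> \<in> space M"
  shows "\<bar>\<epsilon> s \<omega> \<bullet> v t \<omega>\<bar> \<le> B * norm (\<epsilon> s \<omega>)"
proof -
  have "\<bar>\<epsilon> s \<omega> \<bullet> v t \<omega>\<bar> \<le> norm (\<epsilon> s \<omega>) * norm (v t \<omega>)"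
    by (rule Cauchy_Schwarz_ineq2)
  also have "\<dots> \<le> norm (\<epsilon> s \<omega>) * B"
    using predictable_bounded[OF assms] by (intro mult_left_mono) auto
  finally show ?thesis
    by (simp add: mult.commute)
qed

lemma integrable_square_inner_predictable: "integrable M (\<lambda>\<omega>. (\<epsilon> t \<omega> \<bullet> v t \<omega>)\<^sup>2)"
proof (rule integrable_bound_on_space)
  show "integrable M (\<lambda>\<omega>. B\<^sup>2 * norm (\<epsilon> t \<omega>) ^ 2)"
    using integrable_noise_power[of 2 t] by simp
  show "norm ((\<epsilon> t \<omega> \<bullet> v t \<omega>)\<^sup>2) \<le> B\<^sup>2 * norm (\<epsilon> t \<omega>) ^ 2" if "\<omega> \<in> space M" for \<omega>
    using power_mono[OF abs_inner_predictable_le[OF that, of t t] abs_ge_zero, of 2]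
    by (simp add: power_mult_distrib)
qed simp

lemma integral_square_inner_predictable_le:
  "(\<integral>\<omega>. (\<epsilon> t \<omega> \<bullet> v t \<omega>)\<^sup>2 \<partial>M) \<le> B\<^sup>2 * (\<integral>\<omega>. norm (\<epsilon> t \<omega>) ^ 2 \<partial>M)"
proof -
  have "(\<integral>\<omega>. (\<epsilon> t \<omega> \<bullet> v t \<omega>)\<^sup>2 \<partial>M) \<le> (\<integral>\<omega>. B\<^sup>2 * norm (\<epsilon> t \<omega>) ^ 2 \<partial>M)"
  proof (rule integral_mono)
    show "(\<epsilon> t \<omega> \<bullet> v t \<omega>)\<^sup>2 \<le> B\<^sup>2 * norm (\<epsilon> t \<omega>) ^ 2" if "\<omega> \<in> space M" for \<omega>
      using power_mono[OF abs_inner_predictable_le[OF that, of t t] abs_ge_zero, of 2]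
      by (simp add: power_mult_distrib)
  qed (use integrable_square_inner_predictable integrable_noise_power[of 2 t] in simp_all)
  then show ?thesis
    by simp
qed

lemma integrable_inner_predictable: "integrable M (\<lambda>\<omega>. \<epsilon> t \<omega> \<bullet> v t \<omega>)"
  by (rule square_integrable_imp_integrable[OF _ integrable_square_inner_predictable]) simp

lemma integral_inner_predictable: "(\<integral>\<omega>. \<epsilon> t \<omega> \<bullet> v t \<omega> \<partial>M) = 0"
  by (rule integral_inner_indep_mean_zero[OF noise_indep, of t "{..<t}" "\<lambda>e. e" "V t"])
     (auto simp: predictable predictable_measurable integrable_noise integral_noise integrable_predictable)

lemma integral_square_noise_mult_inner_predictable_same:
  "(\<integral>\<omega>. norm (\<epsilon> t \<omega>) ^ 2 * (\<epsilon> t \<omega> \<bullet> v t \<omega>) \<partial>M) = 0"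
proof -
  have "(\<integral>\<omega>. norm (\<epsilon> t \<omega>) ^ 2 * (\<epsilon> t \<omega> \<bullet> v t \<omega>) \<partial>M)
      = (\<integral>\<omega>. (norm (\<epsilon> t \<omega>) ^ 2 *\<^sub>R \<epsilon> t \<omega>) \<bullet> v t \<omega> \<partial>M)"
    by simp
  also have "\<dots> = 0"
    by (rule integral_inner_indep_mean_zero[OF noise_indep, of t "{..<t}" "\<lambda>e. norm e ^ 2 *\<^sub>R e" "V t"])
       (auto simp: predictable predictable_measurable integrable_cubic_noise integral_cubic_noise
         integrable_predictable)
  finally show ?thesis .
qed

lemma integral_square_noise_mult_inner_predictable_other:
  assumes "s \<noteq> t"
  shows "(\<integral>\<omega>. norm (\<epsilon> s \<omega>) ^ 2 * (\<epsilon> t \<omega> \<bullet> v t \<omega>) \<partial>M) = 0"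
proof -
  define h where "h f = norm (f s) ^ 2 *\<^sub>R V t (restrict f {..<t})" for f :: "nat \<Rightarrow> 'e"
  have "(\<integral>\<omega>. norm (\<epsilon> s \<omega>) ^ 2 * (\<epsilon> t \<omega> \<bullet> v t \<omega>) \<partial>M)
      = (\<integral>\<omega>. \<epsilon> t \<omega> \<bullet> (norm (\<epsilon> s \<omega>) ^ 2 *\<^sub>R v t \<omega>) \<partial>M)"
    by simp
  also have "\<dots> = 0"
  proof (rule integral_inner_indep_mean_zero[OF noise_indep, of t "insert s {..<t}" "\<lambda>e. e" h])
    show "h \<in> borel_measurable (PiM (insert s {..<t}) (\<lambda>_. borel))"
      unfolding h_def
      by (intro borel_measurable_scaleR borel_measurable_power borel_measurable_norm
          measurable_component_singleton measurable_predictable_restrict) auto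
    show "norm (\<epsilon> s \<omega>) ^ 2 *\<^sub>R v t \<omega> = h (\<lambda>j\<in>insert s {..<t}. \<epsilon> j \<omega>)" if "\<omega> \<in> space M" for \<omega>
    proof -
      have "insert s {..<t} \<inter> {..<t} = {..<t}" by auto
      then show ?thesis using that by (simp add: h_def predictable)
    qed
    show "integrable M (\<lambda>\<omega>. norm (\<epsilon> s \<omega>) ^ 2 *\<^sub>R v t \<omega>)"
    proof (rule integrable_bound_on_space)
      show "integrable M (\<lambda>\<omega>. B * norm (\<epsilon> s \<omega>) ^ 2)"
        using integrable_noise_power[of 2 s] by simp
      show "norm (norm (\<epsilon> s \<omega>) ^ 2 *\<^sub>R v t \<omega>) \<le> B * norm (\<epsilon> s \<omega>) ^ 2" if "\<omega> \<in> space M" for \<omega>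
        using mult_right_mono[OF predictable_bounded[OF that, of t], of "norm (\<epsilon> s \<omega>) ^ 2"]
        by (simp add: mult.commute)
    qed simp
  qed (use assms in \<open>auto simp: integrable_noise integral_noise\<close>)
  finally show ?thesis .
qed

lemma integral_inner_predictable_mult_less:
  assumes "s < t"
  shows "(\<integral>\<omega>. (\<epsilon> s \<omega> \<bullet> v s \<omega>) * (\<epsilon> t \<omega> \<bullet> v t \<omega>) \<partial>M) = 0"
proof -
  define h where "h f = (f s \<bullet> V s (restrict f {..<s})) *\<^sub>R V t f" for f :: "nat \<Rightarrow> 'e"
  have "(\<integral>\<omega>. (\<epsilon> s \<omega> \<bullet> v s \<omega>) * (\<epsilon> t \<omega> \<bullet> v t \<omega>) \<partial>M)
      = (\<integral>\<omega>. \<epsilon> t \<omega> \<bullet> ((\<epsilon> s \<omega> \<bullet> v s \<omega>) *\<^sub>R v t \<omega>) \<partial>M)"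
    by simp
  also have "\<dots> = 0"
  proof (rule integral_inner_indep_mean_zero[OF noise_indep, of t "{..<t}" "\<lambda>e. e" h])
    show "h \<in> borel_measurable (PiM {..<t} (\<lambda>_. borel))"
      unfolding h_def using assms
      by (intro borel_measurable_scaleR borel_measurable_inner measurable_component_singleton
          measurable_predictable_restrict predictable_measurable) auto
    show "(\<epsilon> s \<omega> \<bullet> v s \<omega>) *\<^sub>R v t \<omega> = h (\<lambda>j\<in>{..<t}. \<epsilon> j \<omega>)" if "\<omega> \<in> space M" for \<omega>
    proof -
      have "{..<t} \<inter> {..<s} = {..<s}" using assms by auto
      then show ?thesis using that assms by (simp add: h_def predictable)
    qed
    show "integrable M (\<lambda>\<omega>. (\<epsilon> s \<omega> \<bullet> v s \<omega>) *\<^sub>R v t \<omega>)"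
    proof (rule integrable_bound_on_space)
      show "integrable M (\<lambda>\<omega>. B * norm (\<epsilon> s \<omega>) * B)"
        using integrable_noise_power[of 1 s] by simp
      show "norm ((\<epsilon> s \<omega> \<bullet> v s \<omega>) *\<^sub>R v t \<omega>) \<le> B * norm (\<epsilon> s \<omega>) * B" if "\<omega> \<in> space M" for \<omega>
        using mult_mono[OF abs_inner_predictable_le[OF that, of s s] predictable_bounded[OF that, of t]]
          predictable_bound_nonneg by simp
    qed simp
  qed (auto simp: integrable_noise integral_noise)
  finally show ?thesis .
qed

definition centered_sq_noise :: "nat \<Rightarrow> 'a \<Rightarrow> real" where
  "centered_sq_noise t \<omega> = norm (\<epsilon> t \<omega>) ^ 2 - expectation (\<lambda>\<omega>. norm (\<epsilon> t \<omega>) ^ 2)"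

lemma centered_sq_noise_measurable [measurable]: "centered_sq_noise t \<in> borel_measurable M"
  unfolding centered_sq_noise_def by measurable

lemma integral_centered_sq_noise: "(\<integral>\<omega>. centered_sq_noise t \<omega> \<partial>M) = 0"
  using integrable_noise_power[of 2 t] by (simp add: centered_sq_noise_def prob_space)

lemma integrable_square_centered_sq_noise: "integrable M (\<lambda>\<omega>. (centered_sq_noise t \<omega>)\<^sup>2)"
  and integral_square_centered_sq_noise_le:
    "(\<integral>\<omega>. (centered_sq_noise t \<omega>)\<^sup>2 \<partial>M) \<le> (\<integral>\<omega>. norm (\<epsilon> t \<omega>) ^ 4 \<partial>M)"
proof -
  have int: "integrable M (\<lambda>\<omega>. (norm (\<epsilon> t \<omega>) ^ 2)\<^sup>2)"
    using noise_fourth_moment[of t] by (simp flip: power_mult)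
  then show "integrable M (\<lambda>\<omega>. (centered_sq_noise t \<omega>)\<^sup>2)"
    using integrable_noise_power[of 2 t] by (simp add: centered_sq_noise_def power2_diff)
  have "(\<integral>\<omega>. (centered_sq_noise t \<omega>)\<^sup>2 \<partial>M) = variance (\<lambda>\<omega>. norm (\<epsilon> t \<omega>) ^ 2)"
    by (simp add: centered_sq_noise_def)
  also have "\<dots> = (\<integral>\<omega>. norm (\<epsilon> t \<omega>) ^ 4 \<partial>M) - (\<integral>\<omega>. norm (\<epsilon> t \<omega>) ^ 2 \<partial>M)\<^sup>2"
    using variance_eq[OF integrable_noise_power[of 2 t] int] by (simp flip: power_mult)
  finally show "(\<integral>\<omega>. (centered_sq_noise t \<omega>)\<^sup>2 \<partial>M) \<le> (\<integral>\<omega>. norm (\<epsilon> t \<omega>) ^ 4 \<partial>M)"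
    by simp
qed

lemma integrable_centered_sq_noise: "integrable M (centered_sq_noise t)"
  by (rule square_integrable_imp_integrable[OF _ integrable_square_centered_sq_noise]) simp

lemma integral_centered_sq_noise_mult:
  "s \<noteq> t \<Longrightarrow> (\<integral>\<omega>. centered_sq_noise s \<omega> * centered_sq_noise t \<omega> \<partial>M) = 0"
  using integral_noise_mult_indep[of s t "\<lambda>e. norm e ^ 2 - expectation (\<lambda>\<omega>. norm (\<epsilon> s \<omega>) ^ 2)"
      "\<lambda>e. norm e ^ 2 - expectation (\<lambda>\<omega>. norm (\<epsilon> t \<omega>) ^ 2)"]
    integral_centered_sq_noise[of s] integrable_noise_power[of 2]
  by (simp add: centered_sq_noise_def)

lemma integral_centered_sq_noise_mult_inner_predictable:
  "(\<integral>\<omega>. centered_sq_noise s \<omega> * (\<epsilon> t \<omega> \<bullet> v t \<omega>) \<partial>M) = 0"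
proof -
  have "integrable M (\<lambda>\<omega>. norm (\<epsilon> s \<omega>) ^ 2 * (\<epsilon> t \<omega> \<bullet> v t \<omega>))"
    using noise_fourth_moment[of s]
    by (intro integrable_mult_of_squares integrable_square_inner_predictable) (simp_all flip: power_mult)
  moreover have "(\<integral>\<omega>. norm (\<epsilon> s \<omega>) ^ 2 * (\<epsilon> t \<omega> \<bullet> v t \<omega>) \<partial>M) = 0"
    using integral_square_noise_mult_inner_predictable_same[of t]
      integral_square_noise_mult_inner_predictable_other[of s t]
    by (cases "s = t") simp_all
  ultimately show ?thesis
    using integrable_inner_predictable[of t]
    by (simp add: centered_sq_noise_def left_diff_distrib integral_inner_predictable)
qed

lemma integral_inner_predictable_mult_other:
  "s \<noteq> t \<Longrightarrow> (\<integral>\<omega>. (\<epsilon> s \<omega> \<bullet> v s \<omega>) * (\<epsilon> t \<omega> \<bullet> v t \<omega>) \<partial>M) = 0"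
  using integral_inner_predictable_mult_less[of s t] integral_inner_predictable_mult_less[of t s]
  by (cases "s < t") (simp_all add: mult.commute)

definition noise_summand :: "(nat \<Rightarrow> real) \<Rightarrow> (nat \<Rightarrow> real) \<Rightarrow> nat \<Rightarrow> 'a \<Rightarrow> real" where
  "noise_summand a b t \<omega> = a t * centered_sq_noise t \<omega> - b t * (\<epsilon> t \<omega> \<bullet> v t \<omega>)"

lemma noise_summand_measurable [measurable]: "noise_summand a b t \<in> borel_measurable M"
  unfolding noise_summand_def by measurable

lemma integrable_square_noise_summand: "integrable M (\<lambda>\<omega>. (noise_summand a b t \<omega>)\<^sup>2)"
  unfolding noise_summand_def
  by (rule integrable_square_scaled_diff[OF _ _ integrable_square_centered_sq_noise
      integrable_square_inner_predictable]) simp_all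

lemma integrable_noise_summand: "integrable M (noise_summand a b t)"
  by (rule square_integrable_imp_integrable[OF _ integrable_square_noise_summand]) simp

lemma integral_noise_summand: "(\<integral>\<omega>. noise_summand a b t \<omega> \<partial>M) = 0"
  using integrable_centered_sq_noise[of t] integrable_inner_predictable[of t]
  by (simp add: noise_summand_def integral_centered_sq_noise integral_inner_predictable)

lemma integral_noise_summand_mult:
  "(\<integral>\<omega>. noise_summand a b s \<omega> * noise_summand a b t \<omega> \<partial>M)
    = a s * a t * (\<integral>\<omega>. centered_sq_noise s \<omega> * centered_sq_noise t \<omega> \<partial>M)
      + b s * b t * (\<integral>\<omega>. (\<epsilon> s \<omega> \<bullet> v s \<omega>) * (\<epsilon> t \<omega> \<bullet> v t \<omega>) \<partial>M)"
proof -
  have "noise_summand a b s \<omega> * noise_summand a b t \<omega>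
      = a s * a t * (centered_sq_noise s \<omega> * centered_sq_noise t \<omega>)
        - a s * b t * (centered_sq_noise s \<omega> * (\<epsilon> t \<omega> \<bullet> v t \<omega>))
        - b s * a t * (centered_sq_noise t \<omega> * (\<epsilon> s \<omega> \<bullet> v s \<omega>))
        + b s * b t * ((\<epsilon> s \<omega> \<bullet> v s \<omega>) * (\<epsilon> t \<omega> \<bullet> v t \<omega>))" for \<omega>
    by (simp add: noise_summand_def algebra_simps)
  then show ?thesis
    by (simp add: integral_centered_sq_noise_mult_inner_predictable integrable_mult_of_squares
        integrable_square_centered_sq_noise integrable_square_inner_predictable)
qed

lemma integral_square_noise_summand_le:
  "(\<integral>\<omega>. (noise_summand a b t \<omega>)\<^sup>2 \<partial>M)
    \<le> (a t)\<^sup>2 * expectation (\<lambda>\<omega>. norm (\<epsilon> t \<omega>) ^ 4)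
      + (b t)\<^sup>2 * B\<^sup>2 * expectation (\<lambda>\<omega>. norm (\<epsilon> t \<omega>) ^ 2)"
proof -
  have "(\<integral>\<omega>. (noise_summand a b t \<omega>)\<^sup>2 \<partial>M)
      = (a t)\<^sup>2 * (\<integral>\<omega>. (centered_sq_noise t \<omega>)\<^sup>2 \<partial>M) + (b t)\<^sup>2 * (\<integral>\<omega>. (\<epsilon> t \<omega> \<bullet> v t \<omega>)\<^sup>2 \<partial>M)"
    using integral_noise_summand_mult[of a b t t] by (simp add: power2_eq_square)
  then show ?thesis
    using mult_left_mono[OF integral_square_centered_sq_noise_le[of t], of "(a t)\<^sup>2"]
      mult_left_mono[OF integral_square_inner_predictable_le[of t], of "(b t)\<^sup>2"]
    by simp
qed

theorem variance_quadratic_noise_le: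
  assumes "finite I"
  shows "variance (\<lambda>\<omega>. c + (\<Sum>t\<in>I. a t * norm (\<epsilon> t \<omega>) ^ 2) - (\<Sum>t\<in>I. b t * (\<epsilon> t \<omega> \<bullet> v t \<omega>)))
    \<le> (\<Sum>t\<in>I. (a t)\<^sup>2 * expectation (\<lambda>\<omega>. norm (\<epsilon> t \<omega>) ^ 4)
                + (b t)\<^sup>2 * B\<^sup>2 * expectation (\<lambda>\<omega>. norm (\<epsilon> t \<omega>) ^ 2))"
proof -
  define d where "d = c + (\<Sum>t\<in>I. a t * expectation (\<lambda>\<omega>. norm (\<epsilon> t \<omega>) ^ 2))"
  have S_eq: "c + (\<Sum>t\<in>I. a t * norm (\<epsilon> t \<omega>) ^ 2) - (\<Sum>t\<in>I. b t * (\<epsilon> t \<omega> \<bullet> v t \<omega>))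
      = d + (\<Sum>t\<in>I. noise_summand a b t \<omega>)" for \<omega>
    by (simp add: noise_summand_def d_def centered_sq_noise_def algebra_simps sum.distrib sum_subtractf)
  have E_S: "expectation (\<lambda>\<omega>. d + (\<Sum>t\<in>I. noise_summand a b t \<omega>)) = d"
    by (simp add: Bochner_Integration.integral_sum integrable_noise_summand integral_noise_summand
        prob_space)
  have "variance (\<lambda>\<omega>. c + (\<Sum>t\<in>I. a t * norm (\<epsilon> t \<omega>) ^ 2) - (\<Sum>t\<in>I. b t * (\<epsilon> t \<omega> \<bullet> v t \<omega>)))
      = (\<integral>\<omega>. (\<Sum>t\<in>I. noise_summand a b t \<omega>)\<^sup>2 \<partial>M)"
    by (simp only: S_eq E_S) simp
  also have "\<dots> = (\<Sum>t\<in>I. \<integral>\<omega>. (noise_summand a b t \<omega>)\<^sup>2 \<partial>M)"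
    using assms by (intro integral_square_sum_orthogonal) (simp_all add: integrable_square_noise_summand
        integral_noise_summand_mult integral_centered_sq_noise_mult integral_inner_predictable_mult_other)
  also have "\<dots> \<le> (\<Sum>t\<in>I. (a t)\<^sup>2 * expectation (\<lambda>\<omega>. norm (\<epsilon> t \<omega>) ^ 4)
                + (b t)\<^sup>2 * B\<^sup>2 * expectation (\<lambda>\<omega>. norm (\<epsilon> t \<omega>) ^ 2))"
    by (intro sum_mono integral_square_noise_summand_le)
  finally show ?thesis .
qed

corollary variance_sgd_objective_le:
  fixes L :: real and \<gamma> :: "nat \<Rightarrow> real" and T :: nat
  assumes "1 \<le> T" "0 < L" "\<And>t. 0 < \<gamma> t \<and> \<gamma> t \<le> 1 / L"
  shows "variance (\<lambda>\<omega>. C + 1 / (2 * real T) * (\<Sum>t=1..T. \<gamma> t * (1 + L * \<gamma> t) * norm (\<epsilon> t \<omega>) ^ 2)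
              - 1 / real T * (\<Sum>t=1..T. \<epsilon> t \<omega> \<bullet> v t \<omega>))
    \<le> 1 / real T * (B\<^sup>2 * (1 / real T * (\<Sum>t=1..T. expectation (\<lambda>\<omega>. norm (\<epsilon> t \<omega>) ^ 2)))
              + (1 / real T * (\<Sum>t=1..T. expectation (\<lambda>\<omega>. norm (\<epsilon> t \<omega>) ^ 4))) / L ^ 2)"
proof -
  define a where "a t = 1 / (2 * real T) * (\<gamma> t * (1 + L * \<gamma> t))" for t
  have a_le: "(a t)\<^sup>2 \<le> (1 / real T)\<^sup>2 / L\<^sup>2" for t
  proof -
    have "0 \<le> a t"
      using assms(2) assms(3)[of t] by (simp add: a_def)
    moreover have "a t \<le> 1 / real T / L"
      using step_weight_le[OF assms(2), of "\<gamma> t"] assms(1,3) by (simp add: a_def field_simps)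
    ultimately show ?thesis
      by (metis power_divide power_mono)
  qed
  have "variance (\<lambda>\<omega>. C + 1 / (2 * real T) * (\<Sum>t=1..T. \<gamma> t * (1 + L * \<gamma> t) * norm (\<epsilon> t \<omega>) ^ 2)
              - 1 / real T * (\<Sum>t=1..T. \<epsilon> t \<omega> \<bullet> v t \<omega>))
      \<le> (\<Sum>t=1..T. (a t)\<^sup>2 * expectation (\<lambda>\<omega>. norm (\<epsilon> t \<omega>) ^ 4)
            + (1 / real T)\<^sup>2 * B\<^sup>2 * expectation (\<lambda>\<omega>. norm (\<epsilon> t \<omega>) ^ 2))"
    using variance_quadratic_noise_le[where I="{1..T}" and c=C and a=a and b="\<lambda>_. 1 / real T"]
    by (simp add: a_def sum_distrib_left mult.assoc)
  also have "\<dots> \<le> (\<Sum>t=1..T. (1 / real T)\<^sup>2 / L\<^sup>2 * expectation (\<lambda>\<omega>. norm (\<epsilon> t \<omega>) ^ 4)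
            + (1 / real T)\<^sup>2 * B\<^sup>2 * expectation (\<lambda>\<omega>. norm (\<epsilon> t \<omega>) ^ 2))"
    by (intro sum_mono add_mono mult_right_mono a_le) simp_all
  also have "\<dots> = (1 / real T)\<^sup>2 / L\<^sup>2 * (\<Sum>t=1..T. expectation (\<lambda>\<omega>. norm (\<epsilon> t \<omega>) ^ 4))
      + (1 / real T)\<^sup>2 * B\<^sup>2 * (\<Sum>t=1..T. expectation (\<lambda>\<omega>. norm (\<epsilon> t \<omega>) ^ 2))"
    by (simp add: sum.distrib sum_distrib_left)
  also have "\<dots> = 1 / real T * (B\<^sup>2 * (1 / real T * (\<Sum>t=1..T. expectation (\<lambda>\<omega>. norm (\<epsilon> t \<omega>) ^ 2)))
              + (1 / real T * (\<Sum>t=1..T. expectation (\<lambda>\<omega>. norm (\<epsilon> t \<omega>) ^ 4))) / L ^ 2)"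
    using assms(1,2) by (simp add: power2_eq_square field_simps)
  finally show ?thesis .
qed

end

theorem theorem2:
  fixes P :: "'a measure"
    and f :: "'e::euclidean_space \<Rightarrow> real" and grad :: "'e \<Rightarrow> 'e"
    and L M :: real and xs x0 :: 'e
    and \<gamma> :: "nat \<Rightarrow> real"
    and x \<epsilon> :: "nat \<Rightarrow> 'a \<Rightarrow> 'e"
    and T :: nat
  assumes prob: "prob_space P"
    and convex: "convex_on UNIV f"
    and grad: "\<And>y. (f has_derivative (\<lambda>h. grad y \<bullet> h)) (at y)"
    and L_pos: "L > 0"
    and lip: "\<And>y z. norm (grad y - grad z) \<le> L * norm (y - z)"
    and minimizer: "\<And>y. f xs \<le> f y"
    and T_pos: "T \<ge> 1"
    and step: "\<And>t. 0 < \<gamma> t \<and> \<gamma> t \<le> 1 / L"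
    and init: "\<And>\<omega>. \<omega> \<in> space P \<Longrightarrow> x 0 \<omega> = x0"
    and iter: "\<And>t \<omega>. \<omega> \<in> space P \<Longrightarrow> x (Suc t) \<omega> = x t \<omega> - \<gamma> t *\<^sub>R (grad (x t \<omega>) + \<epsilon> t \<omega>)"
    and eps_meas: "\<And>t. \<epsilon> t \<in> borel_measurable P"
    and eps_int4: "\<And>t. integrable P (\<lambda>\<omega>. norm (\<epsilon> t \<omega>) ^ 4)"
    and eps_indep: "prob_space.indep_vars P (\<lambda>_. borel) \<epsilon> UNIV"
    and eps_cond_mean: "\<And>t u. AE \<omega> in P. real_cond_exp P (hist P x t) (\<lambda>\<omega>. \<epsilon> t \<omega> \<bullet> u) \<omega> = 0"
    and eps_sym: "\<And>t. distr P borel (\<epsilon> t) = distr P borel (\<lambda>\<omega>. - \<epsilon> t \<omega>)"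
    and bounded: "\<And>t \<omega>. \<omega> \<in> space P \<Longrightarrow> norm (x t \<omega> - xs) ^ 2 \<le> M ^ 2"
  shows "prob_space.variance P
           (\<lambda>\<omega>. M ^ 2 / (2 * \<gamma> T * real T)
              + 1 / (2 * real T) * (\<Sum>t=1..T. \<gamma> t * (1 + L * \<gamma> t) * norm (\<epsilon> t \<omega>) ^ 2)
              - 1 / real T * (\<Sum>t=1..T. \<epsilon> t \<omega> \<bullet> (x t \<omega> - (L * \<gamma> t ^ 2) *\<^sub>R grad (x t \<omega>) - xs)))
         \<le> 1 / real T * (4 * M ^ 2 * (1 / real T * (\<Sum>t=1..T. prob_space.expectation P (\<lambda>\<omega>. norm (\<epsilon> t \<omega>) ^ 2)))
              + (1 / real T * (\<Sum>t=1..T. prob_space.expectation P (\<lambda>\<omega>. norm (\<epsilon> t \<omega>) ^ 4))) / L ^ 2)"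
proof -
  interpret prob_space P
    by (rule prob)
  have grad_xs: "grad xs = 0"
    using grad minimizer by (rule gradient_eq_0_at_minimizer)
  have "L-lipschitz_on UNIV grad"
    using lip L_pos by (intro lipschitz_onI) (auto simp: dist_norm)
  then have grad_measurable: "grad \<in> borel_measurable borel"
    by (intro borel_measurable_continuous_onI lipschitz_on_continuous_on)
  define V where "V t e = sgd_path x0 \<gamma> grad e t - (L * \<gamma> t ^ 2) *\<^sub>R grad (sgd_path x0 \<gamma> grad e t) - xs"
    for t e
  interpret symmetric_noise P \<epsilon> "\<lambda>t \<omega>. x t \<omega> - (L * \<gamma> t ^ 2) *\<^sub>R grad (x t \<omega>) - xs" V "2 * \<bar>M\<bar>"
  proof
    show "x t \<omega> - (L * \<gamma> t ^ 2) *\<^sub>R grad (x t \<omega>) - xs = V t (\<lambda>j\<in>{..<t}. \<epsilon> j \<omega>)"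
      if "\<omega> \<in> space P" for t \<omega>
      using iterates_eq_sgd_path[of "\<lambda>t. x t \<omega>", OF init iter] that by (simp add: V_def)
    show "V t \<in> borel_measurable (PiM {..<t} (\<lambda>_. borel))" for t
      unfolding V_def using measurable_sgd_path[OF grad_measurable, of t "{..<t}"]
      by (intro borel_measurable_diff borel_measurable_scaleR measurable_compose[OF _ grad_measurable]) auto
    show "norm (x t \<omega> - (L * \<gamma> t ^ 2) *\<^sub>R grad (x t \<omega>) - xs) \<le> 2 * \<bar>M\<bar>"
      if "\<omega> \<in> space P" for t \<omega>
    proof -
      have "norm (x t \<omega> - xs) \<le> \<bar>M\<bar>"
        using bounded[OF that, of t] by (metis abs_norm_cancel power2_le_iff_abs_le abs_ge_zero power2_abs)
      then show ?thesis
        using norm_sub_scaled_grad_le[OF lip grad_xs L_pos, of "\<gamma> t" "x t \<omega>"] step[of t] by simp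
    qed
  qed (use eps_meas eps_indep eps_sym eps_int4 in simp_all)
  show ?thesis
    using variance_sgd_objective_le[OF T_pos L_pos step] by (simp add: power_mult_distrib)
qed

end
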